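(* Let $q$ be an exponential factor, $L=\mathrm{Levels}(q)=\{k_1>\dots>k_m\}$ and $K=\mathrm{slope}(q)$. Then there are homeomorphisms $$\mathbf B(q)\cong(\mathbb C^* )^m\times\mathbb C^N,\qquad \mathbf{SB}(q)\cong(\mathbb C^* )^m\times\mathbb C^M,$$ where $N=|\mathrm{Inc}(L)\cap(0,K]|$ and $M=|\mathrm{Inc}(L)\setminus\mathbb N|$. In particular $\dim\mathbf B(q)=|A(L)\cap(0,K]|$ and $$\dim\mathbf{SB}(q)=|A(L)\setminus\mathbb N|=\sum_{i=1}^m\big(r_ik_i-\lfloor r_{i-1}k_i\rfloor\big),$$ with $r_0=1$ and $r_i$ the lcm of the denominators of $k_1,\dots,k_i$.
   Context: Exponential factors: finite sums $q=\sum_k a_kx^k$, $a_k\in\mathbb C$, $k\in\mathbb Q_{>0}$ (i.e. elements of $\bigcup_{r\ge1}x^{1/r}\mathbb C[x^{1/r}]$). $\mathrm{slope}(q)$ = largest exponent with nonzero coefficient ($0$ if $q=0$); $\mathrm{ram}(q)$ = least $r\ge1$ with $q\in x^{1/r}\mathbb C[x^{1/r}]$. Galois operator $\sigma(\sum a_kx^k)=\sum a_ke^{-2\pi\sqrt{-1}k}x^k$; $\langle q\rangle=\{\sigma^i(q)\}$ has $\mathrm{ram}(q)$ elements. $\mathrm{Levels}(q)=\{\mathrm{slope}(q-\sigma^i(q)):i\in\mathbb Z\}\setminus\{0\}$. Admissible exponents: for $L=\{k_1>\dots>k_m\}\subset\mathbb Q_{>0}$ let $r_i$ be the lcm of the denominators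 (in lowest terms) of $k_1,\dots,k_i$, $A(L)=\mathbb N_{>0}\cup\bigcup_{i=1}^m\big((0,k_i]\cap\tfrac1{r_i}\mathbb N\big)$, and $\mathrm{Inc}(L)=A(L)\setminus L$. Configuration spaces: for a pointed irregular type $Q=[(n_1,q_1),\dots,(n_m,q_m)]$ (with $n_i\in\mathbb N_{>0}$, $q_i$ in distinct Galois orbits), let $r=\mathrm{lcm}_i\mathrm{ram}(q_i)$, $K=\max_i\mathrm{slope}(q_i)$, $s=rK$, and for $\mathbf a=(a_{i,j})\in\mathbb C^{ms}$ set $Q_{\mathbf a}=[(n_i,\sum_{j=1}^sa_{i,j}x^{j/r})]_{i=1}^m$. Then $\mathbf B(Q)=\{\mathbf a\in\mathbb C^{ms}:Q_{\mathbf a}\sim Q\}$ (subspace topology), where $Q'\sim Q$ means same multiplicities and $\mathrm{slope}(\sigma^k(q'_i)-\sigma^l(q'_j))=\mathrm{slope}(\sigma^k(q_i)-\sigma^l(q_j))$ for all $i,j$ and $0\le k\le\mathrm{ram}(q_i)$, $0\le l\le\mathrm{ram}(q_j)$. $\mathbf{SB}(Q)=\{\mathbf a\in\mathbf B(Q):\mathrm{Tr}(Q_{\mathbf a})=0\}$, where the trace is the sum $\sum_i n_i\sum_{t=0}^{\mathrm{ram}(q_i)-1}\sigma^t(q_i)$ of all entries of the associated full list. Here $\mathbf B(q):=\mathbf B([(1,q)])$, $\mathbf{SB}(q):=\mathbf{SB}([(1,q)])$. *)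

theory Defs
  imports "HOL-Analysis.Analysis"
begin

text \<open>An exponential factor is represented by its coefficient function
  q :: rat => complex, q k being the coefficient of x^k.  It has finite support
  contained in the positive rationals.\<close>

definition supp_ef :: "(rat \<Rightarrow> complex) \<Rightarrow> rat set" where
  "supp_ef q = {k. q k \<noteq> 0}"

definition exp_factor :: "(rat \<Rightarrow> complex) \<Rightarrow> bool" where
  "exp_factor q \<longleftrightarrow> finite (supp_ef q) \<and> (\<forall>k \<in> supp_ef q. k > 0)"

definition slope :: "(rat \<Rightarrow> complex) \<Rightarrow> rat" where
  "slope q = (if supp_ef q = {} then 0 else Max (supp_ef q))"

definition ram :: "(rat \<Rightarrow> complex) \<Rightarrow> nat" where
  "ram q = (LEAST r::nat. r \<ge> 1 \<and> (\<forall>k \<in> supp_ef q. k * of_nat r \<in> \<int>))"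

definition sigma :: "(rat \<Rightarrow> complex) \<Rightarrow> (rat \<Rightarrow> complex)" where
  "sigma q = (\<lambda>k. cis (- 2 * pi * of_rat k) * q k)"

definition sigma_pow :: "int \<Rightarrow> (rat \<Rightarrow> complex) \<Rightarrow> (rat \<Rightarrow> complex)" where
  "sigma_pow i q = (\<lambda>k. cis (- 2 * pi * of_int i * of_rat k) * q k)"

definition Levels :: "(rat \<Rightarrow> complex) \<Rightarrow> rat set" where
  "Levels q = {slope (q - sigma_pow i q) | i. True} - {0}"

text \<open>Admissible exponents.  klist L lists L in decreasing order k_1 > ... > k_m;
  rr L i is the lcm of the denominators of k_1, ..., k_i (rr L 0 = 1).\<close>
definition klist :: "rat set \<Rightarrow> rat list" where
  "klist L = rev (sorted_list_of_set L)"

definition rr :: "rat set \<Rightarrow> nat \<Rightarrow> int" where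
  "rr L i = Lcm ((\<lambda>k. snd (quotient_of k)) ` set (take i (klist L)))"

definition A :: "rat set \<Rightarrow> rat set" where
  "A L = {rat_of_nat n | n. n > 0} \<union>
     (\<Union>i \<in> {1..card L}. {x. 0 < x \<and> x \<le> klist L ! (i - 1) \<and>
        (\<exists>n::nat. x = of_nat n / of_int (rr L i))})"

definition Inc :: "rat set \<Rightarrow> rat set" where
  "Inc L = A L - L"

text \<open>Configuration spaces for Q = [(1,q)]: r = ram q, K = slope q, s = rK,
  and a = (a_1,...,a_s) in C^s (extensional functions on {1..s}).\<close>
definition sdim :: "(rat \<Rightarrow> complex) \<Rightarrow> nat" where
  "sdim q = nat \<lfloor>of_nat (ram q) * slope q\<rfloor>"

definition qa :: "(rat \<Rightarrow> complex) \<Rightarrow> (nat \<Rightarrow> complex) \<Rightarrow> (rat \<Rightarrow> complex)" where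
  "qa q a = (\<lambda>k. \<Sum>j\<in>{1..sdim q}. if k = of_nat j / of_nat (ram q) then a j else 0)"

definition B_set :: "(rat \<Rightarrow> complex) \<Rightarrow> (nat \<Rightarrow> complex) set" where
  "B_set q = {a \<in> PiE {1..sdim q} (\<lambda>_. UNIV).
     \<forall>k l::nat. k \<le> ram q \<longrightarrow> l \<le> ram q \<longrightarrow>
       slope (sigma_pow (int k) (qa q a) - sigma_pow (int l) (qa q a))
         = slope (sigma_pow (int k) q - sigma_pow (int l) q)}"

definition trace_ef :: "(rat \<Rightarrow> complex) \<Rightarrow> (rat \<Rightarrow> complex)" where
  "trace_ef p = (\<lambda>k. \<Sum>t<ram p. sigma_pow (int t) p k)"

definition SB_set :: "(rat \<Rightarrow> complex) \<Rightarrow> (nat \<Rightarrow> complex) set" where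
  "SB_set q = {a \<in> B_set q. trace_ef (qa q a) = (\<lambda>_. 0)}"

definition Bspace :: "(rat \<Rightarrow> complex) \<Rightarrow> (nat \<Rightarrow> complex) topology" where
  "Bspace q = subtopology (product_topology (\<lambda>_. euclidean) {1..sdim q}) (B_set q)"

definition SBspace :: "(rat \<Rightarrow> complex) \<Rightarrow> (nat \<Rightarrow> complex) topology" where
  "SBspace q = subtopology (product_topology (\<lambda>_. euclidean) {1..sdim q}) (SB_set q)"

definition CstarC :: "nat \<Rightarrow> nat \<Rightarrow> ((nat \<Rightarrow> complex) \<times> (nat \<Rightarrow> complex)) topology" where
  "CstarC m n = prod_topology
     (product_topology (\<lambda>_. subtopology euclidean (- {0})) {..<m})
     (product_topology (\<lambda>_. euclidean) {..<n})"

end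

theory Submission
  imports Defs "HOL-Library.Real_Mod"
begin

text \<open>The slope of \<open>p - \<sigma>\<^sup>d p\<close> is the largest exponent \<open>x\<close> of \<open>p\<close> with \<open>d x \<notin> \<int>\<close>.
  So \<open>Q\<^sub>a \<sim> q\<close> says that the support \<open>S\<close> of \<open>Q\<^sub>a\<close> induces the same function
  \<open>d \<mapsto> max {x \<in> S. d x \<notin> \<int>}\<close> as the support of \<open>q\<close>, and this happens exactly when \<open>S\<close>
  contains every level and every element of \<open>S\<close> is admissible, i.e.\ lies in \<open>A(L)\<close>.
  Hence \<open>B(q)\<close> is a product, over the exponents \<open>j/r \<le> K\<close>, of \<open>\<complex>\<^sup>*\<close> (levels),
  \<open>\<complex>\<close> (other admissible exponents) and \<open>{0}\<close>; the trace vanishes exactly when no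
  integral exponent occurs, which cuts out \<open>SB(q)\<close>.  Counting \<open>A(L) - \<nat>\<close> layer by layer,
  the \<open>i\<close>-th layer consisting of the multiples of \<open>1/r\<^sub>i\<close> in \<open>(0, k\<^sub>i]\<close> that are
  not multiples of \<open>1/r\<^sub>i\<^sub>-\<^sub>1\<close>, gives the dimension formula.\<close>

section \<open>Denominators and roots of unity\<close>

abbreviation den :: "rat \<Rightarrow> int" where "den x \<equiv> snd (quotient_of x)"

lemma den_pos: "0 < den x"
  by (metis prod.collapse quotient_of_denom_pos)

lemma of_int_mult_Ints_iff_den_dvd: "of_int d * x \<in> (\<int>::rat set) \<longleftrightarrow> den x dvd d"
proof -
  obtain p q where pq: "quotient_of x = (p, q)" by (cases "quotient_of x")
  have q0: "q > 0" and cop: "coprime p q" and x: "x = of_int p / of_int q"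
    using quotient_of_denom_pos[OF pq] quotient_of_coprime[OF pq] quotient_of_div[OF pq] by auto
  have "of_int d * x \<in> \<int> \<longleftrightarrow> (\<exists>t. of_int (d * p) = (of_int (q * t) :: rat))"
    using q0 by (auto simp: x field_simps elim!: Ints_cases)
  also have "\<dots> \<longleftrightarrow> q dvd d * p"
    by (metis dvd_def of_int_eq_iff)
  also have "\<dots> \<longleftrightarrow> q dvd d"
    using cop by (metis coprime_commute coprime_dvd_mult_left_iff)
  finally show ?thesis using pq by simp
qed

lemma of_rat_in_Ints_iff: "(of_rat x :: real) \<in> \<int> \<longleftrightarrow> x \<in> \<int>"
  by (metis Ints_cases Ints_of_int of_rat_eq_iff of_rat_of_int_eq)

lemma cis_2pi_of_rat_eq_1_iff: "cis (2 * pi * of_rat x) = 1 \<longleftrightarrow> x \<in> \<int>"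
proof -
  have "cis (2 * pi * of_rat x) = 1 \<longleftrightarrow> (\<exists>n::int. of_rat x = (of_int n :: real))"
    unfolding cis_eq_1_iff by (intro ex_cong1) (auto simp: mult.commute)
  also have "\<dots> \<longleftrightarrow> x \<in> \<int>"
    by (metis (full_types) Ints_cases Ints_of_int of_rat_in_Ints_iff)
  finally show ?thesis .
qed

lemma cis_mult_of_rat_eq_iff:
  "cis (- 2 * pi * of_int k * of_rat x) = cis (- 2 * pi * of_int l * of_rat x) \<longleftrightarrow> of_int (k - l) * x \<in> \<int>"
proof -
  have "cis (- 2 * pi * of_int k * of_rat x) = cis (- 2 * pi * of_int l * of_rat x) \<longleftrightarrow>
        cis (- 2 * pi * of_int l * of_rat x) / cis (- 2 * pi * of_int k * of_rat x) = 1"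
    by (metis cis_neq_zero divide_self nonzero_eq_divide_eq)
  also have "cis (- 2 * pi * of_int l * of_rat x) / cis (- 2 * pi * of_int k * of_rat x)
           = cis (2 * pi * of_rat (of_int (k - l) * x))"
    by (simp add: cis_divide of_rat_mult of_rat_diff algebra_simps)
  finally show ?thesis by (simp only: cis_2pi_of_rat_eq_1_iff)
qed

section \<open>The largest exponent not killed by an integer\<close>

text \<open>The value \<open>0\<close> when every element of \<open>S\<close> is killed by \<open>d\<close> is the slope of the zero
  factor; it is never a level, since exponents are positive.\<close>

definition max_nonint :: "rat set \<Rightarrow> int \<Rightarrow> rat" where
  "max_nonint S d =
     (if {x\<in>S. of_int d * x \<notin> \<int>} = {} then 0 else Max {x\<in>S. of_int d * x \<notin> \<int>})"

definition level_set :: "rat set \<Rightarrow> rat set" where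
  "level_set S = range (max_nonint S) - {0}"

lemma max_nonint_mem:
  assumes "finite S" "max_nonint S d \<noteq> 0"
  shows "max_nonint S d \<in> S" "of_int d * max_nonint S d \<notin> \<int>"
proof -
  have ne: "{x\<in>S. of_int d * x \<notin> \<int>} \<noteq> {}"
    using assms(2) unfolding max_nonint_def by (cases "{x\<in>S. of_int d * x \<notin> \<int>} = {}") auto
  have eq: "max_nonint S d = Max {x\<in>S. of_int d * x \<notin> \<int>}"
    unfolding max_nonint_def using ne by (rule if_not_P)
  have "Max {x\<in>S. of_int d * x \<notin> \<int>} \<in> {x\<in>S. of_int d * x \<notin> \<int>}"
    using assms(1) ne by (intro Max_in) auto
  then show "max_nonint S d \<in> S" "of_int d * max_nonint S d \<notin> \<int>"
    unfolding eq by simp_all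
qed

lemma max_nonint_ge:
  assumes "finite S" "x \<in> S" "of_int d * x \<notin> \<int>"
  shows "x \<le> max_nonint S d"
  using assms by (auto simp: max_nonint_def intro!: Max_ge)

lemma max_nonint_eqI:
  assumes "finite S" "x \<in> S" "of_int d * x \<notin> \<int>"
    and "\<And>y. y \<in> S \<Longrightarrow> of_int d * y \<notin> \<int> \<Longrightarrow> y \<le> x"
  shows "max_nonint S d = x"
  using assms by (auto simp: max_nonint_def intro!: Max_eqI)

lemma max_nonint_eq_0_iff:
  assumes "finite S" "\<forall>x\<in>S. 0 < x"
  shows "max_nonint S d = 0 \<longleftrightarrow> (\<forall>y\<in>S. of_int d * y \<in> \<int>)"
proof
  assume "max_nonint S d = 0"
  then show "\<forall>y\<in>S. of_int d * y \<in> \<int>"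
    using max_nonint_ge[OF assms(1)] assms(2) by force
qed (simp add: max_nonint_def)

lemma max_nonint_mod:
  assumes "0 < r" "\<forall>x\<in>S. of_int r * x \<in> \<int>"
  shows "max_nonint S (d mod r) = max_nonint S d"
proof -
  have "of_int (d mod r) * x \<in> \<int> \<longleftrightarrow> of_int d * x \<in> \<int>" if "x \<in> S" for x
  proof -
    have "of_int d * x = of_int (d div r) * (of_int r * x) + of_int (d mod r) * x"
      by (metis div_mult_mod_eq distrib_right mult.assoc mult.commute of_int_add of_int_mult)
    moreover have "of_int (d div r) * (of_int r * x) \<in> \<int>"
      using assms(2) that by simp
    ultimately show ?thesis
      by (metis Ints_add Ints_diff add_diff_cancel_left')
  qed
  then have "{x\<in>S. of_int (d mod r) * x \<notin> \<int>} = {x\<in>S. of_int d * x \<notin> \<int>}"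
    by blast
  then show ?thesis
    unfolding max_nonint_def by (simp only:)
qed

lemma supp_sigma_pow_diff:
  "supp_ef (sigma_pow k p - sigma_pow l p) = {x \<in> supp_ef p. of_int (k - l) * x \<notin> \<int>}"
proof -
  have "(a * c - b * c \<noteq> 0) \<longleftrightarrow> c \<noteq> 0 \<and> a \<noteq> b" for a b c :: complex
    by (metis eq_iff_diff_eq_0 left_diff_distrib mult_eq_0_iff)
  then show ?thesis
    unfolding supp_ef_def sigma_pow_def using cis_mult_of_rat_eq_iff by auto
qed

lemma slope_sigma_pow_diff:
  "slope (sigma_pow k p - sigma_pow l p) = max_nonint (supp_ef p) (k - l)"
  unfolding slope_def max_nonint_def supp_sigma_pow_diff ..

lemma Levels_eq_level_set: "Levels q = level_set (supp_ef q)"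
proof -
  have "slope (q - sigma_pow i q) = max_nonint (supp_ef q) (- i)" for i
    using slope_sigma_pow_diff[of 0 q i] by (simp add: sigma_pow_def)
  then have "{slope (q - sigma_pow i q) | i. True} = range (max_nonint (supp_ef q))"
    by (auto simp: image_iff) (metis minus_minus)
  then show ?thesis
    unfolding Levels_def level_set_def by simp
qed

lemma
  assumes "finite S" "\<forall>x\<in>S. 0 < x"
  shows level_set_subset: "level_set S \<subseteq> S"
    and max_nonint_level_set: "max_nonint (level_set S) = max_nonint S"
proof -
  show sub: "level_set S \<subseteq> S"
    using max_nonint_mem(1)[OF assms(1)] by (auto simp: level_set_def)
  have fin: "finite (level_set S)" and pos: "\<forall>x\<in>level_set S. 0 < x"
    using sub assms finite_subset by auto
  show "max_nonint (level_set S) = max_nonint S"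
  proof
    fix d
    show "max_nonint (level_set S) d = max_nonint S d"
    proof (cases "max_nonint S d = 0")
      case True
      then have "max_nonint (level_set S) d = 0"
        using sub max_nonint_eq_0_iff[OF assms] max_nonint_eq_0_iff[OF fin pos] by blast
      then show ?thesis
        using True by simp
    next
      case False
      then have "max_nonint S d \<in> level_set S"
        by (simp add: level_set_def)
      then show ?thesis
        using False max_nonint_mem[OF assms(1)] max_nonint_ge[OF assms(1)] sub
        by (intro max_nonint_eqI[OF fin]) auto
    qed
  qed
qed

lemma level_set_not_Ints:
  assumes "finite S" "x \<in> level_set S"
  shows "x \<notin> \<int>"
  using assms max_nonint_mem[OF assms(1)] by (auto simp: level_set_def) (metis Ints_mult Ints_of_int)

definition admissible :: "rat set \<Rightarrow> rat \<Rightarrow> bool" where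
  "admissible L x \<longleftrightarrow> (\<forall>d::int. of_int d * x \<notin> \<int> \<longrightarrow> (\<exists>\<mu>\<in>L. x \<le> \<mu> \<and> of_int d * \<mu> \<notin> \<int>))"

lemma admissible_if_max_nonint_eq:
  assumes S': "finite S'" "\<forall>x\<in>S'. 0 < x" and "finite L"
    and eq: "max_nonint S' = max_nonint L" and x: "x \<in> S'"
  shows "admissible L x"
  unfolding admissible_def
proof (intro allI impI)
  fix d assume dx: "of_int d * x \<notin> \<int>"
  have ge: "x \<le> max_nonint L d"
    using max_nonint_ge[OF S'(1) x dx] eq by simp
  then have "max_nonint L d \<noteq> 0"
    using x S'(2) by force
  then show "\<exists>\<mu>\<in>L. x \<le> \<mu> \<and> of_int d * \<mu> \<notin> \<int>"
    using max_nonint_mem[OF \<open>finite L\<close>] ge by blast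
qed

lemma max_nonint_eq_if_admissible:
  assumes S': "finite S'" "\<forall>x\<in>S'. 0 < x" and L: "finite L" "L \<subseteq> S'"
    and adm: "\<forall>x\<in>S'. admissible L x"
  shows "max_nonint S' = max_nonint L"
proof
  fix d
  show "max_nonint S' d = max_nonint L d"
  proof (cases "max_nonint S' d = 0")
    case True
    then show ?thesis
      using L(2) max_nonint_eq_0_iff[OF S'] by (auto simp: max_nonint_def)
  next
    case False
    note top = max_nonint_mem[OF S'(1) False]
    then obtain \<mu> where \<mu>: "\<mu> \<in> L" "max_nonint S' d \<le> \<mu>" "of_int d * \<mu> \<notin> \<int>"
      using adm unfolding admissible_def by blast
    have "\<mu> = max_nonint S' d"
      using max_nonint_ge[OF S'(1) _ \<mu>(3)] \<mu> L(2) by force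
    then show ?thesis
      using \<mu> L(2) top max_nonint_ge[OF S'(1)] by (metis max_nonint_eqI[OF L(1)] subsetD)
  qed
qed

lemma max_nonint_eq_iff_admissible:
  assumes S: "finite S" "\<forall>x\<in>S. 0 < x" and S': "finite S'" "\<forall>x\<in>S'. 0 < x"
  shows "max_nonint S' = max_nonint S \<longleftrightarrow>
    level_set S \<subseteq> S' \<and> (\<forall>x\<in>S'. admissible (level_set S) x)"
proof -
  have fin: "finite (level_set S)"
    using level_set_subset[OF S] S(1) finite_subset by blast
  have "level_set S \<subseteq> S'" if "max_nonint S' = max_nonint S"
    using max_nonint_mem(1)[OF S'(1)] that unfolding level_set_def by auto
  then show ?thesis
    using admissible_if_max_nonint_eq[OF S' fin] max_nonint_eq_if_admissible[OF S' fin]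
    unfolding max_nonint_level_set[OF S] by blast
qed

section \<open>Admissible exponents\<close>

lemma length_klist: "length (klist L) = card L"
  by (simp add: klist_def)

lemma set_klist: "finite L \<Longrightarrow> set (klist L) = L"
  by (simp add: klist_def)

lemma distinct_klist: "distinct (klist L)"
  by (simp add: klist_def)

lemma klist_nth_less:
  assumes "finite L" "i < j" "j < card L"
  shows "klist L ! j < klist L ! i"
proof -
  have "sorted_wrt (\<lambda>x y. y < x) (klist L)"
    using assms(1) by (simp add: klist_def sorted_wrt_rev strict_sorted_list_of_set)
  then show ?thesis
    using assms(2,3) by (simp add: length_klist sorted_wrt_iff_nth_less)
qed

lemma klist_nth_mono:
  "finite L \<Longrightarrow> i \<le> j \<Longrightarrow> j < card L \<Longrightarrow> klist L ! j \<le> klist L ! i"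
  using klist_nth_less[of L i j] by (cases "i = j") auto

lemma set_take_klist:
  assumes "finite L"
  shows "set (take (card {\<mu>\<in>L. c \<le> \<mu>}) (klist L)) = {\<mu>\<in>L. c \<le> \<mu>}"
proof -
  define xs where "xs = klist L"
  define i where "i = length (takeWhile (\<lambda>\<mu>. c \<le> \<mu>) xs)"
  have tw: "takeWhile (\<lambda>\<mu>. c \<le> \<mu>) xs = take i xs"
    unfolding i_def by (rule takeWhile_eq_take)
  have "{\<mu>\<in>L. c \<le> \<mu>} \<subseteq> set (take i xs)"
  proof
    fix \<mu> assume \<mu>: "\<mu> \<in> {\<mu>\<in>L. c \<le> \<mu>}"
    then obtain t where t: "t < card L" "\<mu> = xs ! t"
      using set_klist[OF assms] length_klist by (metis in_set_conv_nth mem_Collect_eq xs_def)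
    have "t < i"
    proof (rule ccontr)
      assume "\<not> t < i"
      then have "i < length xs" "xs ! t \<le> xs ! i"
        using t klist_nth_mono[OF assms, of i t] by (auto simp: xs_def length_klist)
      then show False
        using \<mu> t nth_length_takeWhile[of "\<lambda>\<mu>. c \<le> \<mu>" xs] i_def by auto
    qed
    then show "\<mu> \<in> set (take i xs)"
      using t by (simp add: in_set_conv_nth length_klist xs_def) (metis nth_take)
  qed
  moreover have "set (take i xs) \<subseteq> {\<mu>\<in>L. c \<le> \<mu>}"
    unfolding tw[symmetric] using set_klist[OF assms] by (auto dest: set_takeWhileD simp: xs_def)
  ultimately have set_eq: "set (take i xs) = {\<mu>\<in>L. c \<le> \<mu>}" by blast
  then have "card {\<mu>\<in>L. c \<le> \<mu>} = i"
    using distinct_card[of "take i xs"] distinct_klist[of L] length_takeWhile_le[of _ xs]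
    by (simp add: i_def xs_def min_absorb2)
  then show ?thesis
    using set_eq xs_def by simp
qed

lemma rr_pos: "0 < rr L i"
proof -
  have "Lcm (den ` set (take i (klist L))) \<noteq> 0"
    using den_pos by (subst Lcm_0_iff) (auto simp: image_iff less_le)
  moreover have "Lcm (den ` set (take i (klist L))) \<ge> 0" by simp
  ultimately show ?thesis unfolding rr_def by linarith
qed

lemma rr_0: "rr L 0 = 1"
  by (simp add: rr_def)

lemma rr_dvd_rr: "i \<le> j \<Longrightarrow> rr L i dvd rr L j"
  unfolding rr_def by (intro Lcm_subset image_mono set_take_subset_set_take)

lemma den_dvd_rr:
  assumes "i \<in> {1..card L}"
  shows "den (klist L ! (i - 1)) dvd rr L i"
proof -
  have "klist L ! (i - 1) \<in> set (take i (klist L))"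
    using assms by (auto simp: in_set_conv_nth length_klist intro!: exI[of _ "i - 1"])
  then show ?thesis
    unfolding rr_def by (intro dvd_Lcm) simp
qed

lemma admissible_iff_den_dvd:
  assumes "finite L"
  shows "admissible L x \<longleftrightarrow> den x dvd rr L (card {\<mu>\<in>L. x \<le> \<mu>})"
proof -
  define R where "R = rr L (card {\<mu>\<in>L. x \<le> \<mu>})"
  have R: "R = Lcm (den ` {\<mu>\<in>L. x \<le> \<mu>})"
    unfolding R_def rr_def set_take_klist[OF assms] ..
  have "admissible L x \<longleftrightarrow> (\<forall>d. (\<forall>\<mu>\<in>L. x \<le> \<mu> \<longrightarrow> of_int d * \<mu> \<in> \<int>) \<longrightarrow> of_int d * x \<in> \<int>)"
    unfolding admissible_def by blast
  also have "\<dots> \<longleftrightarrow> (\<forall>d. R dvd d \<longrightarrow> den x dvd d)"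
    unfolding R Lcm_dvd_iff by (auto simp: of_int_mult_Ints_iff_den_dvd)
  also have "\<dots> \<longleftrightarrow> den x dvd R"
    by (meson dvd_refl dvd_trans)
  finally show ?thesis
    unfolding R_def .
qed

lemma mem_A_iff:
  assumes "0 < x"
  shows "x \<in> A L \<longleftrightarrow> x \<in> \<int> \<or> (\<exists>j\<in>{1..card L}. x \<le> klist L ! (j - 1) \<and> den x dvd rr L j)"
proof -
  have pos_Nats: "y \<in> \<nat> \<longleftrightarrow> y \<in> \<int>" if "0 < y" for y :: rat
    using that by (simp add: Nats_altdef2)
  have nat: "x \<in> {rat_of_nat n | n. n > 0} \<longleftrightarrow> x \<in> \<int>"
    using assms pos_Nats[OF assms] by (auto simp: Nats_def)
  have frac: "(\<exists>n::nat. x = of_nat n / of_int (rr L j)) \<longleftrightarrow> den x dvd rr L j" for j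
  proof -
    have "(\<exists>n::nat. x = of_nat n / of_int (rr L j)) \<longleftrightarrow> of_int (rr L j) * x \<in> \<nat>"
      using rr_pos[of L j] by (auto simp: Nats_def field_simps)
    also have "\<dots> \<longleftrightarrow> of_int (rr L j) * x \<in> \<int>"
      using assms rr_pos[of L j] by (intro pos_Nats) simp
    finally show ?thesis
      by (simp add: of_int_mult_Ints_iff_den_dvd)
  qed
  have "x \<in> A L \<longleftrightarrow> x \<in> {rat_of_nat n | n. n > 0} \<or>
      (\<exists>j\<in>{1..card L}. x \<le> klist L ! (j - 1) \<and> (\<exists>n::nat. x = of_nat n / of_int (rr L j)))"
    unfolding A_def using assms by blast
  then show ?thesis
    by (simp only: nat frac)
qed

lemma le_klist_nth_card:
  assumes "finite L" "0 < card {\<mu>\<in>L. c \<le> \<mu>}"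
  shows "c \<le> klist L ! (card {\<mu>\<in>L. c \<le> \<mu>} - 1)"
proof -
  have "card {\<mu>\<in>L. c \<le> \<mu>} \<le> card L"
    using assms(1) by (intro card_mono) auto
  then have "klist L ! (card {\<mu>\<in>L. c \<le> \<mu>} - 1) \<in> set (take (card {\<mu>\<in>L. c \<le> \<mu>}) (klist L))"
    using assms(2) by (auto simp: in_set_conv_nth length_klist intro!: exI[of _ "card {\<mu>\<in>L. c \<le> \<mu>} - 1"])
  then show ?thesis
    using set_take_klist[OF assms(1)] by auto
qed

lemma le_card_if_le_klist_nth:
  assumes "finite L" "j \<in> {1..card L}" "c \<le> klist L ! (j - 1)"
  shows "j \<le> card {\<mu>\<in>L. c \<le> \<mu>}"
proof -
  have sub: "set (take j (klist L)) \<subseteq> {\<mu>\<in>L. c \<le> \<mu>}"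
  proof
    fix \<mu> assume "\<mu> \<in> set (take j (klist L))"
    then obtain t where t: "t < j" "\<mu> = klist L ! t"
      using assms(2) by (auto simp: in_set_conv_nth length_klist)
    have "t \<le> j - 1" "j - 1 < card L"
      using t(1) assms(2) by auto
    then have "klist L ! (j - 1) \<le> \<mu>"
      using t(2) klist_nth_mono[OF assms(1)] by blast
    moreover have "\<mu> \<in> L"
      using t assms(2) nth_mem[of t "klist L"] set_klist[OF assms(1)] by (auto simp: length_klist)
    ultimately show "\<mu> \<in> {\<mu>\<in>L. c \<le> \<mu>}"
      using assms(3) by auto
  qed
  have "j = length (take j (klist L))"
    using assms(2) by (simp add: length_klist)
  also have "\<dots> = card (set (take j (klist L)))"
    using distinct_klist by (intro distinct_card[symmetric] distinct_take)
  also have "\<dots> \<le> card {\<mu>\<in>L. c \<le> \<mu>}"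
    using assms(1) sub by (intro card_mono) auto
  finally show ?thesis .
qed

lemma admissible_iff_mem_A:
  assumes "finite L" "0 < x"
  shows "admissible L x \<longleftrightarrow> x \<in> A L"
proof -
  define i where "i = card {\<mu>\<in>L. x \<le> \<mu>}"
  have i_le: "i \<le> card L"
    unfolding i_def using assms(1) by (intro card_mono) auto
  have "admissible L x \<longleftrightarrow> den x dvd rr L i"
    unfolding i_def by (rule admissible_iff_den_dvd[OF assms(1)])
  also have "\<dots> \<longleftrightarrow> x \<in> A L"
  proof
    assume dvd: "den x dvd rr L i"
    show "x \<in> A L"
    proof (cases "i = 0")
      case True
      then show ?thesis
        using dvd mem_A_iff[OF assms(2)] of_int_mult_Ints_iff_den_dvd[of 1 x] by (simp add: rr_0)
    next
      case False
      then show ?thesis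
        using dvd i_le le_klist_nth_card[OF assms(1), of x] mem_A_iff[OF assms(2)]
        unfolding i_def by force
    qed
  next
    assume "x \<in> A L"
    then consider "x \<in> \<int>" | j where "j \<in> {1..card L}" "x \<le> klist L ! (j - 1)" "den x dvd rr L j"
      using mem_A_iff[OF assms(2)] by blast
    then show "den x dvd rr L i"
    proof cases
      case 1
      then show ?thesis
        using of_int_mult_Ints_iff_den_dvd[of 1 x] by (metis mult_1 of_int_1 one_dvd dvd_trans)
    next
      case 2
      then show ?thesis
        using rr_dvd_rr[OF le_card_if_le_klist_nth[OF assms(1)]] dvd_trans unfolding i_def by blast
    qed
  qed
  finally show ?thesis .
qed

section \<open>Counting admissible exponents\<close>

lemma A_pos: "x \<in> A L \<Longrightarrow> 0 < x"
  unfolding A_def by auto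

lemma mult_Ints_dvd_mono: "a dvd b \<Longrightarrow> of_int a * x \<in> (\<int>::rat set) \<Longrightarrow> of_int b * x \<in> \<int>"
  by (meson of_int_mult_Ints_iff_den_dvd dvd_trans)

definition multiples_upto :: "int \<Rightarrow> rat \<Rightarrow> rat set" where
  "multiples_upto R k = {x. 0 < x \<and> x \<le> k \<and> of_int R * x \<in> \<int>}"

lemma multiples_upto_eq_image:
  assumes "0 < R"
  shows "multiples_upto R k = (\<lambda>n. of_int n / of_int R) ` {1..\<lfloor>of_int R * k\<rfloor>}"
proof (intro set_eqI iffI)
  fix x :: rat assume "x \<in> multiples_upto R k"
  then obtain t where x: "0 < x" "x \<le> k" "of_int R * x = of_int t"
    unfolding multiples_upto_def by (auto elim: Ints_cases)
  have "(0::rat) < of_int t"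
    using x(1,3) assms by (metis of_int_0_less_iff mult_pos_pos)
  moreover have "t \<le> \<lfloor>of_int R * k\<rfloor>"
    using x assms mult_left_mono[OF x(2), of "of_int R"] by (auto simp: le_floor_iff)
  moreover have "x = of_int t / of_int R"
    using x assms by (simp add: field_simps)
  ultimately show "x \<in> (\<lambda>n. of_int n / of_int R) ` {1..\<lfloor>of_int R * k\<rfloor>}"
    by (intro image_eqI[where x = t]) auto
next
  fix x :: rat assume "x \<in> (\<lambda>n. of_int n / of_int R) ` {1..\<lfloor>of_int R * k\<rfloor>}"
  then obtain n where n: "1 \<le> n" "of_int n \<le> of_int R * k" "x = of_int n / of_int R"
    by (auto simp: le_floor_iff)
  then show "x \<in> multiples_upto R k"
    using assms by (simp add: multiples_upto_def divide_le_eq mult.commute)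
qed

lemma
  assumes "0 < R"
  shows finite_multiples_upto: "finite (multiples_upto R k)"
    and card_multiples_upto: "card (multiples_upto R k) = nat \<lfloor>of_int R * k\<rfloor>"
proof -
  have "inj_on (\<lambda>n. of_int n / (of_int R :: rat)) {1..\<lfloor>of_int R * k\<rfloor>}"
    using assms by (auto simp: inj_on_def)
  then show "finite (multiples_upto R k)" "card (multiples_upto R k) = nat \<lfloor>of_int R * k\<rfloor>"
    unfolding multiples_upto_eq_image[OF assms] by (simp_all add: card_image)
qed

definition A_layer :: "rat set \<Rightarrow> nat \<Rightarrow> rat set" where
  "A_layer L i = multiples_upto (rr L i) (klist L ! (i - 1)) - multiples_upto (rr L (i - 1)) (klist L ! (i - 1))"

lemma mem_A_minus_Nats_iff:
  "x \<in> A L - \<nat> \<longleftrightarrow>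
     0 < x \<and> x \<notin> \<int> \<and> (\<exists>j\<in>{1..card L}. x \<in> multiples_upto (rr L j) (klist L ! (j - 1)))"
  using mem_A_iff[of x L] A_pos[of x L]
  by (auto simp: multiples_upto_def Nats_altdef2 of_int_mult_Ints_iff_den_dvd)

lemma mem_A_layer_if_mem_multiples_upto:
  assumes "finite L" "x \<notin> \<int>" "j \<in> {1..card L}" "x \<in> multiples_upto (rr L j) (klist L ! (j - 1))"
  shows "\<exists>i\<in>{1..card L}. x \<in> A_layer L i"
  using assms(3,4)
proof (induction j rule: less_induct)
  case (less j)
  show ?case
  proof (cases "x \<in> multiples_upto (rr L (j - 1)) (klist L ! (j - 1))")
    case False
    then show ?thesis
      using less.prems by (auto simp: A_layer_def)
  next
    case True
    then have "j \<noteq> 1"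
      using assms(2) by (auto simp: multiples_upto_def rr_0)
    then have j: "j - 1 \<in> {1..card L}" "j - 1 - 1 \<le> j - 1" "j - 1 < card L"
      using less.prems(1) by auto
    then have "klist L ! (j - 1) \<le> klist L ! (j - 1 - 1)"
      by (intro klist_nth_mono[OF assms(1)])
    then have "x \<in> multiples_upto (rr L (j - 1)) (klist L ! (j - 1 - 1))"
      using True unfolding multiples_upto_def by auto
    moreover have "j - 1 < j"
      using less.prems(1) by auto
    ultimately show ?thesis
      using less.IH j(1) by blast
  qed
qed

lemma A_minus_Nats_eq_UN_A_layer:
  assumes "finite L"
  shows "A L - \<nat> = (\<Union>i\<in>{1..card L}. A_layer L i)"
proof (intro set_eqI iffI)
  fix x assume "x \<in> A L - \<nat>"
  then obtain j where "x \<notin> \<int>" "j \<in> {1..card L}" "x \<in> multiples_upto (rr L j) (klist L ! (j - 1))"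
    unfolding mem_A_minus_Nats_iff by blast
  then show "x \<in> (\<Union>i\<in>{1..card L}. A_layer L i)"
    using mem_A_layer_if_mem_multiples_upto[OF assms] by blast
next
  fix x assume "x \<in> (\<Union>i\<in>{1..card L}. A_layer L i)"
  then obtain i where i: "i \<in> {1..card L}" "x \<in> A_layer L i"
    by blast
  then have "x \<notin> \<int>"
    by (auto simp: A_layer_def multiples_upto_def)
  then show "x \<in> A L - \<nat>"
    using i mem_A_minus_Nats_iff by (auto simp: A_layer_def multiples_upto_def)
qed

lemma A_layer_disjoint:
  assumes "i < j"
  shows "A_layer L i \<inter> A_layer L j = {}"
proof -
  have "rr L i dvd rr L (j - 1)"
    using assms by (intro rr_dvd_rr) simp
  then show ?thesis
    unfolding A_layer_def multiples_upto_def using mult_Ints_dvd_mono by blast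
qed

lemma card_A_layer:
  assumes "finite L" "\<forall>x\<in>L. 0 < x" "i \<in> {1..card L}"
  defines "k \<equiv> klist L ! (i - 1)"
  shows "rat_of_nat (card (A_layer L i)) = of_int (rr L i) * k - of_int \<lfloor>of_int (rr L (i - 1)) * k\<rfloor>"
proof -
  have "i - 1 < length (klist L)"
    using assms(3) by (auto simp: length_klist)
  then have k: "k \<in> L"
    unfolding k_def using nth_mem set_klist[OF assms(1)] by blast
  have sub: "multiples_upto (rr L (i - 1)) k \<subseteq> multiples_upto (rr L i) k"
    unfolding multiples_upto_def using mult_Ints_dvd_mono[OF rr_dvd_rr[of "i - 1" i L]] by auto
  have "of_int (rr L i) * k \<in> \<int>"
    using den_dvd_rr[OF assms(3)] by (simp add: k_def of_int_mult_Ints_iff_den_dvd)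
  then have int: "of_int \<lfloor>of_int (rr L i) * k\<rfloor> = of_int (rr L i) * k"
    by (metis Ints_cases floor_of_int)
  have nonneg: "0 \<le> of_int (rr L j) * k" for j
    using k assms(2) rr_pos[of L j] by (simp add: order_less_imp_le)
  have "card (A_layer L i) = card (multiples_upto (rr L i) k) - card (multiples_upto (rr L (i - 1)) k)"
    unfolding A_layer_def k_def[symmetric] using sub finite_multiples_upto[OF rr_pos]
    by (intro card_Diff_subset) (auto intro: finite_subset)
  moreover have "card (multiples_upto (rr L (i - 1)) k) \<le> card (multiples_upto (rr L i) k)"
    using sub finite_multiples_upto[OF rr_pos] by (intro card_mono)
  ultimately show ?thesis
    using nonneg[of i] nonneg[of "i - 1"] int by (simp add: card_multiples_upto[OF rr_pos])
qed

lemma card_A_minus_Nats: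
  assumes "finite L" "\<forall>x\<in>L. 0 < x"
  shows "rat_of_nat (card (A L - \<nat>)) =
    (\<Sum>i = 1..card L. of_int (rr L i) * klist L ! (i - 1)
                      - of_int \<lfloor>of_int (rr L (i - 1)) * klist L ! (i - 1)\<rfloor>)"
proof -
  have "card (A L - \<nat>) = (\<Sum>i = 1..card L. card (A_layer L i))"
    unfolding A_minus_Nats_eq_UN_A_layer[OF assms(1)]
  proof (intro card_UN_disjoint)
    show "\<forall>i\<in>{1..card L}. finite (A_layer L i)"
      using finite_multiples_upto[OF rr_pos] by (simp add: A_layer_def)
    show "\<forall>i\<in>{1..card L}. \<forall>j\<in>{1..card L}. i \<noteq> j \<longrightarrow> A_layer L i \<inter> A_layer L j = {}"
      using A_layer_disjoint by (metis Int_commute linorder_neqE_nat)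
  qed simp
  then show ?thesis
    using card_A_layer[OF assms] by simp
qed

section \<open>Ramification and the trace\<close>

lemma ram_ge_1_and_Ints:
  assumes "finite (supp_ef p)"
  shows "1 \<le> ram p" "\<forall>k\<in>supp_ef p. k * of_nat (ram p) \<in> \<int>"
proof -
  define w where "w = nat (\<Prod>k\<in>supp_ef p. den k)"
  have "0 < (\<Prod>k\<in>supp_ef p. den k)"
    by (intro prod_pos) (simp add: den_pos)
  then have w: "of_nat w = (of_int (\<Prod>k\<in>supp_ef p. den k) :: rat)" "1 \<le> w"
    by (simp_all add: w_def)
  have "\<forall>k\<in>supp_ef p. k * of_nat w \<in> \<int>"
  proof
    fix k assume "k \<in> supp_ef p"
    then have "of_int (\<Prod>k\<in>supp_ef p. den k) * k \<in> \<int>"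
      unfolding of_int_mult_Ints_iff_den_dvd by (rule dvd_prodI[OF assms])
    then show "k * of_nat w \<in> \<int>"
      by (simp only: w(1) mult.commute)
  qed
  then have "\<exists>r::nat. 1 \<le> r \<and> (\<forall>k\<in>supp_ef p. k * of_nat r \<in> \<int>)"
    using w(2) by blast
  then show "1 \<le> ram p" "\<forall>k\<in>supp_ef p. k * of_nat (ram p) \<in> \<int>"
    unfolding ram_def using LeastI_ex[where P = "\<lambda>r. 1 \<le> r \<and> (\<forall>k\<in>supp_ef p. k * of_nat r \<in> \<int>)"]
    by blast+
qed

lemma sum_cis_of_rat_powers:
  assumes "1 \<le> r" "of_nat r * k \<in> \<int>"
  shows "(\<Sum>t<r. cis (- 2 * pi * of_rat k) ^ t) = (if k \<in> \<int> then of_nat r else 0)"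
proof -
  have pow: "cis (- 2 * pi * of_rat k) ^ n = cis (2 * pi * of_rat (- of_nat n * k))" for n
    unfolding Complex.DeMoivre by (simp add: of_rat_mult of_rat_minus mult_ac)
  show ?thesis
  proof (cases "k \<in> \<int>")
    case True
    then have "cis (- 2 * pi * of_rat k) = 1"
      using pow[of 1] cis_2pi_of_rat_eq_1_iff[of "- k"] by (simp add: minus_in_Ints_iff)
    then show ?thesis
      using True by simp
  next
    case False
    then have "cis (- 2 * pi * of_rat k) \<noteq> 1"
      using pow[of 1] cis_2pi_of_rat_eq_1_iff[of "- k"] by (simp add: minus_in_Ints_iff)
    moreover have "cis (- 2 * pi * of_rat k) ^ r = 1"
      using pow[of r] cis_2pi_of_rat_eq_1_iff assms(2) by (simp add: minus_in_Ints_iff)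
    ultimately show ?thesis
      using False by (simp add: sum_gp_strict)
  qed
qed

lemma trace_ef_eq:
  assumes "finite (supp_ef p)"
  shows "trace_ef p k = (if k \<in> \<int> then of_nat (ram p) * p k else 0)"
proof (cases "k \<in> supp_ef p")
  case True
  have "trace_ef p k = (\<Sum>t<ram p. cis (- 2 * pi * of_rat k) ^ t) * p k"
    unfolding trace_ef_def sigma_pow_def sum_distrib_right
    by (intro sum.cong refl) (simp only: Complex.DeMoivre of_int_of_nat_eq mult_ac)
  then show ?thesis
    using True ram_ge_1_and_Ints[OF assms] sum_cis_of_rat_powers by (simp add: mult.commute)
next
  case False
  then show ?thesis
    by (simp add: trace_ef_def sigma_pow_def supp_ef_def)
qed

lemma trace_ef_eq_0_iff:
  assumes "finite (supp_ef p)"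
  shows "trace_ef p = (\<lambda>_. 0) \<longleftrightarrow> (\<forall>k\<in>supp_ef p. k \<notin> \<int>)"
  using ram_ge_1_and_Ints(1)[OF assms]
  by (auto simp: fun_eq_iff trace_ef_eq[OF assms] supp_ef_def)

section \<open>Products of punctured and full complex lines\<close>

lemma continuous_map_product_reindex:
  assumes "\<sigma> ` I \<subseteq> J" "\<And>i. i \<in> I \<Longrightarrow> Y i = X (\<sigma> i)"
  shows "continuous_map (product_topology X J) (product_topology Y I) (\<lambda>a. restrict (\<lambda>i. a (\<sigma> i)) I)"
  unfolding continuous_map_componentwise
  using assms by (auto intro!: continuous_map_product_projection)

text \<open>The range of the coefficient at exponent \<open>x\<close> on \<open>B(q)\<close> (with \<open>T = A(L)\<close>) and on \<open>SB(q)\<close>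
  (with \<open>T = A(L) - \<int>\<close>).\<close>

definition coeff_range :: "rat set \<Rightarrow> rat set \<Rightarrow> rat \<Rightarrow> complex set" where
  "coeff_range L T x = (if x \<in> L then - {0} else if x \<in> T then UNIV else {0})"

lemma mem_coeff_range_iff:
  "L \<subseteq> T \<Longrightarrow> c \<in> coeff_range L T x \<longleftrightarrow> (x \<in> L \<longrightarrow> c \<noteq> 0) \<and> (c \<noteq> 0 \<longrightarrow> x \<in> T)"
  by (auto simp: coeff_range_def)

lemma continuous_map_CstarC_assemble:
  fixes X :: "nat \<Rightarrow> complex set"
  assumes hL: "hL ` Lj \<subseteq> {..<m}" and hF: "hF ` Fj \<subseteq> {..<n}" and "Lj \<inter> Fj = {}"
    and XL: "\<And>j. j \<in> Lj \<Longrightarrow> X j = - {0}" and XF: "\<And>j. j \<in> Fj \<Longrightarrow> X j = UNIV"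
    and X0: "\<And>j. j \<in> P \<Longrightarrow> j \<notin> Lj \<Longrightarrow> j \<notin> Fj \<Longrightarrow> X j = {0}"
  shows "continuous_map (CstarC m n) (product_topology (\<lambda>j. subtopology euclidean (X j)) P)
           (\<lambda>(u, v). restrict (\<lambda>j. if j \<in> Lj then u (hL j) else if j \<in> Fj then v (hF j) else 0) P)"
  unfolding continuous_map_componentwise
proof (intro conjI ballI)
  fix j assume j: "j \<in> P"
  consider "j \<in> Lj" | "j \<in> Fj" | "j \<notin> Lj" "j \<notin> Fj" by blast
  then show "continuous_map (CstarC m n) (subtopology euclidean (X j))
      (\<lambda>x. (case x of (u, v) \<Rightarrow> restrict (\<lambda>j. if j \<in> Lj then u (hL j) else if j \<in> Fj then v (hF j) else 0) P) j)"
  proof cases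
    case 1
    have "continuous_map (CstarC m n) (subtopology euclidean (- {0})) (\<lambda>y. fst y (hL j))"
      unfolding CstarC_def using hL 1
      by (intro continuous_map_compose[unfolded o_def, OF continuous_map_fst]
          continuous_map_product_projection) auto
    then show ?thesis
      using 1 j XL by (auto simp: case_prod_beta)
  next
    case 2
    have "continuous_map (CstarC m n) euclidean (\<lambda>y. snd y (hF j))"
      unfolding CstarC_def using hF 2
      by (intro continuous_map_compose[unfolded o_def, OF continuous_map_snd]
          continuous_map_product_projection) auto
    then show ?thesis
      using 2 j XF \<open>Lj \<inter> Fj = {}\<close> by (auto simp: case_prod_beta)
  next
    case 3
    then show ?thesis
      using j X0 by (auto simp: case_prod_beta)
  qed
qed auto

lemma PiE_homeomorphic_CstarC:
  fixes X :: "nat \<Rightarrow> complex set"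
  assumes gL: "bij_betw gL {..<m} Lj" and gF: "bij_betw gF {..<n} Fj"
    and sub: "Lj \<subseteq> P" "Fj \<subseteq> P" "Lj \<inter> Fj = {}"
    and XL: "\<And>j. j \<in> Lj \<Longrightarrow> X j = - {0}" and XF: "\<And>j. j \<in> Fj \<Longrightarrow> X j = UNIV"
    and X0: "\<And>j. j \<in> P \<Longrightarrow> j \<notin> Lj \<Longrightarrow> j \<notin> Fj \<Longrightarrow> X j = {0}"
  shows "product_topology (\<lambda>j. subtopology euclidean (X j)) P homeomorphic_space CstarC m n"
proof -
  define hL where "hL = the_inv_into {..<m} gL"
  define hF where "hF = the_inv_into {..<n} gF"
  have hL: "hL j < m" "gL (hL j) = j" if "j \<in> Lj" for j
    using that bij_betw_the_inv_into[OF gL] f_the_inv_into_f_bij_betw[OF gL]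
    unfolding hL_def bij_betw_def by auto
  have hF: "hF j < n" "gF (hF j) = j" if "j \<in> Fj" for j
    using that bij_betw_the_inv_into[OF gF] f_the_inv_into_f_bij_betw[OF gF]
    unfolding hF_def bij_betw_def by auto
  have gL': "gL i \<in> Lj" "hL (gL i) = i" if "i < m" for i
    using that gL the_inv_into_f_f[of gL "{..<m}" i] unfolding hL_def bij_betw_def by auto
  have gF': "gF i \<in> Fj" "hF (gF i) = i" if "i < n" for i
    using that gF the_inv_into_f_f[of gF "{..<n}" i] unfolding hF_def bij_betw_def by auto
  let ?X = "product_topology (\<lambda>j. subtopology euclidean (X j)) P"
  define f where "f a = (restrict (\<lambda>i. a (gL i)) {..<m}, restrict (\<lambda>i. a (gF i)) {..<n})"
    for a :: "nat \<Rightarrow> complex"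
  define g :: "(nat \<Rightarrow> complex) \<times> (nat \<Rightarrow> complex) \<Rightarrow> nat \<Rightarrow> complex"
    where "g = (\<lambda>(u, v). restrict (\<lambda>j. if j \<in> Lj then u (hL j) else if j \<in> Fj then v (hF j) else 0) P)"
  have "continuous_map ?X (CstarC m n) f"
    unfolding f_def CstarC_def
    using gL' gF' sub XL XF by (intro continuous_map_pairedI continuous_map_product_reindex) auto
  moreover have "continuous_map (CstarC m n) ?X g"
    unfolding g_def using hL hF sub(3) XL XF X0 by (intro continuous_map_CstarC_assemble) auto
  moreover have "g (f x) = x" if "x \<in> topspace ?X" for x
  proof
    fix j
    show "g (f x) j = x j"
      using that hL hF X0[of j] sub(3) unfolding g_def f_def
      by (cases "j \<in> P") (auto simp: PiE_iff extensional_def)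
  qed
  moreover have "f (g y) = y" if "y \<in> topspace (CstarC m n)" for y
  proof -
    obtain u v where y: "y = (u, v)"
      by fastforce
    have "u \<in> extensional {..<m}" "v \<in> extensional {..<n}"
      using that by (auto simp: y CstarC_def PiE_def)
    then have "restrict (\<lambda>i. g (u, v) (gL i)) {..<m} = u" "restrict (\<lambda>i. g (u, v) (gF i)) {..<n} = v"
      using gL' gF' sub unfolding g_def by (force simp: extensional_def fun_eq_iff)+
    then show ?thesis
      unfolding f_def y by simp
  qed
  ultimately show ?thesis
    unfolding homeomorphic_space_def homeomorphic_maps_def by blast
qed

lemma PiE_coeff_range_homeomorphic_CstarC:
  fixes e :: "nat \<Rightarrow> rat"
  assumes "finite P"
  shows "subtopology (product_topology (\<lambda>_. euclidean) P) (PiE P (\<lambda>j. coeff_range L T (e j)))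
           homeomorphic_space CstarC (card {j\<in>P. e j \<in> L}) (card {j\<in>P. e j \<in> T - L})"
proof -
  define Lj where "Lj = {j\<in>P. e j \<in> L}"
  define Fj where "Fj = {j\<in>P. e j \<in> T - L}"
  have "finite Lj" "finite Fj"
    using assms by (simp_all add: Lj_def Fj_def)
  then obtain gL gF where gL: "bij_betw gL {..<card Lj} Lj" and gF: "bij_betw gF {..<card Fj} Fj"
    using ex_bij_betw_nat_finite unfolding atLeast0LessThan by metis
  have "product_topology (\<lambda>j. subtopology euclidean (coeff_range L T (e j))) P
      homeomorphic_space CstarC (card Lj) (card Fj)"
    by (rule PiE_homeomorphic_CstarC[OF gL gF]) (auto simp: Lj_def Fj_def coeff_range_def)
  then show ?thesis
    by (simp only: subtopology_product_topology Lj_def Fj_def)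
qed

section \<open>The configuration spaces\<close>

text \<open>\<open>B(q)\<close> only compares \<open>\<sigma>\<^sup>k\<close> for \<open>k \<le> r\<close>; this suffices because \<open>max_nonint S\<close> is
  \<open>r\<close>-periodic for \<open>S \<subseteq> (1/r)\<int>\<close>.\<close>

lemma sigma_pow_slopes_eq_iff:
  assumes "1 \<le> r" "\<forall>x\<in>supp_ef p. of_nat r * x \<in> \<int>" "\<forall>x\<in>supp_ef p'. of_nat r * x \<in> \<int>"
  shows "(\<forall>k l::nat. k \<le> r \<longrightarrow> l \<le> r \<longrightarrow>
            slope (sigma_pow (int k) p - sigma_pow (int l) p) = slope (sigma_pow (int k) p' - sigma_pow (int l) p'))
         \<longleftrightarrow> max_nonint (supp_ef p) = max_nonint (supp_ef p')"
proof
  assume H: "\<forall>k l::nat. k \<le> r \<longrightarrow> l \<le> r \<longrightarrow>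
    slope (sigma_pow (int k) p - sigma_pow (int l) p) = slope (sigma_pow (int k) p' - sigma_pow (int l) p')"
  show "max_nonint (supp_ef p) = max_nonint (supp_ef p')"
  proof
    fix d
    define k where "k = nat (d mod int r)"
    have k: "int k = d mod int r" "k \<le> r"
      using assms(1) unfolding k_def by (simp_all add: nat_le_iff order_less_imp_le)
    have "max_nonint (supp_ef p) d = max_nonint (supp_ef p) (int k - int 0)"
      using max_nonint_mod[of "int r" "supp_ef p" d] assms(1,2) k(1) by simp
    also have "\<dots> = max_nonint (supp_ef p') (int k - int 0)"
      using H k(2) by (simp only: slope_sigma_pow_diff[symmetric])
    also have "\<dots> = max_nonint (supp_ef p') d"
      using max_nonint_mod[of "int r" "supp_ef p'" d] assms(1,3) k(1) by simp
    finally show "max_nonint (supp_ef p) d = max_nonint (supp_ef p') d" .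
  qed
qed (simp add: slope_sigma_pow_diff)

lemma qa_grid_point:
  assumes "1 \<le> ram q" "j \<in> {1..sdim q}"
  shows "qa q a (of_nat j / of_nat (ram q)) = a j"
proof -
  have "(of_nat j / of_nat (ram q) = (of_nat i / of_nat (ram q) :: rat)) \<longleftrightarrow> j = i" for i
    using assms(1) by simp
  then have "qa q a (of_nat j / of_nat (ram q)) = (\<Sum>i\<in>{1..sdim q}. if j = i then a i else 0)"
    unfolding qa_def by (intro sum.cong refl) presburger
  also have "\<dots> = a j"
    using assms(2) by simp
  finally show ?thesis .
qed

lemma supp_qa:
  assumes "1 \<le> ram q"
  shows "supp_ef (qa q a) = (\<lambda>j. of_nat j / of_nat (ram q)) ` {j\<in>{1..sdim q}. a j \<noteq> 0}"
proof (intro set_eqI iffI)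
  fix x :: rat assume "x \<in> supp_ef (qa q a)"
  then have x: "qa q a x \<noteq> 0"
    by (simp add: supp_ef_def)
  have "\<exists>j\<in>{1..sdim q}. x = of_nat j / of_nat (ram q)"
  proof (rule ccontr)
    assume "\<not> (\<exists>j\<in>{1..sdim q}. x = of_nat j / of_nat (ram q))"
    then have "qa q a x = 0"
      unfolding qa_def by (intro sum.neutral) auto
    then show False
      using x by simp
  qed
  then obtain j where j: "j \<in> {1..sdim q}" "x = of_nat j / of_nat (ram q)"
    by blast
  then show "x \<in> (\<lambda>j. of_nat j / of_nat (ram q)) ` {j\<in>{1..sdim q}. a j \<noteq> 0}"
    using x qa_grid_point[OF assms j(1)] by auto
next
  fix x :: rat assume "x \<in> (\<lambda>j. of_nat j / of_nat (ram q)) ` {j\<in>{1..sdim q}. a j \<noteq> 0}"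
  then show "x \<in> supp_ef (qa q a)"
    using qa_grid_point[OF assms] by (auto simp: supp_ef_def)
qed

locale exponential_factor =
  fixes q :: "rat \<Rightarrow> complex"
  assumes exp_factor: "exp_factor q"
begin

definition grid_point :: "nat \<Rightarrow> rat" where
  "grid_point j = of_nat j / of_nat (ram q)"

lemma finite_supp: "finite (supp_ef q)"
  using exp_factor by (simp add: exp_factor_def)

lemma supp_pos: "\<forall>x\<in>supp_ef q. 0 < x"
  using exp_factor by (simp add: exp_factor_def)

lemma ram_ge_1: "1 \<le> ram q"
  using ram_ge_1_and_Ints(1)[OF finite_supp] .

lemma ram_mult_supp_Ints: "\<forall>x\<in>supp_ef q. of_nat (ram q) * x \<in> \<int>"
  using ram_ge_1_and_Ints(2)[OF finite_supp] by (simp add: mult.commute)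

lemma supp_le_slope: "x \<in> supp_ef q \<Longrightarrow> x \<le> slope q"
  using finite_supp by (auto simp: slope_def)

lemma grid_point_image: "grid_point ` {1..sdim q} = multiples_upto (int (ram q)) (slope q)"
proof -
  have "0 \<le> slope q"
  proof (cases "supp_ef q = {}")
    case False
    then have "slope q \<in> supp_ef q"
      using Max_in[OF finite_supp] by (simp add: slope_def)
    then show ?thesis
      using supp_pos by force
  qed (simp add: slope_def)
  then have "{1..\<lfloor>of_int (int (ram q)) * slope q\<rfloor>} = int ` {1..sdim q}"
    by (simp add: sdim_def image_int_atLeastAtMost)
  then show ?thesis
    using ram_ge_1 by (simp add: multiples_upto_eq_image image_image grid_point_def)
qed

lemma inj_grid_point: "inj grid_point"
  using ram_ge_1 by (auto simp: inj_def grid_point_def)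

lemma supp_subset_grid: "supp_ef q \<subseteq> multiples_upto (int (ram q)) (slope q)"
  using supp_pos supp_le_slope ram_mult_supp_Ints by (auto simp: multiples_upto_def)

lemma finite_Levels: "finite (Levels q)"
  and Levels_subset_supp: "Levels q \<subseteq> supp_ef q"
  and Levels_not_Ints: "Levels q \<inter> \<int> = {}"
  using level_set_subset[OF finite_supp supp_pos] level_set_not_Ints[OF finite_supp]
    finite_subset[OF _ finite_supp] by (auto simp: Levels_eq_level_set)

lemma Levels_subset_A: "Levels q \<subseteq> A (Levels q)"
  using admissible_iff_mem_A[OF finite_Levels] Levels_subset_supp supp_pos
  by (auto simp: admissible_def)

lemma A_Levels_ram_Ints:
  assumes "x \<in> A (Levels q)"
  shows "of_nat (ram q) * x \<in> \<int>"
proof -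
  have "admissible (Levels q) x"
    using assms admissible_iff_mem_A[OF finite_Levels A_pos] by blast
  then show ?thesis
    using Levels_subset_supp ram_mult_supp_Ints unfolding admissible_def
    by (metis of_int_of_nat_eq subsetD)
qed

lemma A_Levels_le_slope:
  assumes "x \<in> A (Levels q)" "x \<notin> \<nat>"
  shows "x \<le> slope q"
proof -
  have "x \<notin> \<int>"
    using assms A_pos[OF assms(1)] by (simp add: Nats_altdef2)
  moreover have "admissible (Levels q) x"
    using assms admissible_iff_mem_A[OF finite_Levels A_pos] by blast
  ultimately obtain \<mu> where "\<mu> \<in> Levels q" "x \<le> \<mu>"
    unfolding admissible_def by (metis mult_1 of_int_1)
  then show ?thesis
    using Levels_subset_supp supp_le_slope by force
qed

lemma supp_qa_grid: "supp_ef (qa q a) = grid_point ` {j\<in>{1..sdim q}. a j \<noteq> 0}"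
  unfolding grid_point_def using supp_qa[OF ram_ge_1] .

lemma finite_supp_qa: "finite (supp_ef (qa q a))"
  by (simp add: supp_qa_grid)

lemma mem_B_set_iff:
  "a \<in> B_set q \<longleftrightarrow> a \<in> PiE {1..sdim q} (\<lambda>_. UNIV) \<and>
     (\<forall>j\<in>{1..sdim q}. (grid_point j \<in> Levels q \<longrightarrow> a j \<noteq> 0) \<and>
                      (a j \<noteq> 0 \<longrightarrow> grid_point j \<in> A (Levels q)))"
proof -
  let ?S = "supp_ef (qa q a)"
  note S = supp_qa_grid[of a]
  have S_pos: "\<forall>x\<in>?S. 0 < x" and S_Ints: "\<forall>x\<in>?S. of_nat (ram q) * x \<in> \<int>"
    using grid_point_image by (auto simp: S multiples_upto_def)
  have "(\<forall>k l::nat. k \<le> ram q \<longrightarrow> l \<le> ram q \<longrightarrow>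
      slope (sigma_pow (int k) (qa q a) - sigma_pow (int l) (qa q a)) = slope (sigma_pow (int k) q - sigma_pow (int l) q))
    \<longleftrightarrow> max_nonint ?S = max_nonint (supp_ef q)"
    by (rule sigma_pow_slopes_eq_iff[OF ram_ge_1 S_Ints ram_mult_supp_Ints])
  also have "\<dots> \<longleftrightarrow> Levels q \<subseteq> ?S \<and> (\<forall>x\<in>?S. admissible (Levels q) x)"
    unfolding Levels_eq_level_set
    by (rule max_nonint_eq_iff_admissible[OF finite_supp supp_pos finite_supp_qa S_pos])
  also have "\<dots> \<longleftrightarrow> Levels q \<subseteq> ?S \<and> ?S \<subseteq> A (Levels q)"
    using admissible_iff_mem_A[OF finite_Levels] S_pos by blast
  also have "\<dots> \<longleftrightarrow> (\<forall>j\<in>{1..sdim q}. (grid_point j \<in> Levels q \<longrightarrow> a j \<noteq> 0) \<and>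
                                      (a j \<noteq> 0 \<longrightarrow> grid_point j \<in> A (Levels q)))"
  proof -
    have "Levels q \<subseteq> grid_point ` {1..sdim q}"
      using Levels_subset_supp supp_subset_grid grid_point_image by blast
    then show ?thesis
      unfolding S by (auto simp: inj_eq[OF inj_grid_point])
  qed
  finally show ?thesis
    unfolding B_set_def by blast
qed

lemma B_set_eq_PiE:
  "B_set q = PiE {1..sdim q} (\<lambda>j. coeff_range (Levels q) (A (Levels q)) (grid_point j))"
  unfolding set_eq_iff mem_B_set_iff PiE_iff mem_coeff_range_iff[OF Levels_subset_A] by blast

lemma SB_set_eq_PiE:
  "SB_set q = PiE {1..sdim q} (\<lambda>j. coeff_range (Levels q) (A (Levels q) - \<int>) (grid_point j))"
proof -
  have trace: "trace_ef (qa q a) = (\<lambda>_. 0) \<longleftrightarrow> (\<forall>j\<in>{1..sdim q}. a j \<noteq> 0 \<longrightarrow> grid_point j \<notin> \<int>)" for a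
    unfolding trace_ef_eq_0_iff[OF finite_supp_qa] supp_qa_grid by blast
  have "Levels q \<subseteq> A (Levels q) - \<int>"
    using Levels_subset_A Levels_not_Ints by blast
  then show ?thesis
    unfolding set_eq_iff SB_set_def mem_Collect_eq mem_B_set_iff trace PiE_iff
      mem_coeff_range_iff[OF \<open>Levels q \<subseteq> A (Levels q) - \<int>\<close>]
    by blast
qed

lemma card_grid_point_preimage:
  "card {j\<in>{1..sdim q}. grid_point j \<in> T} = card (T \<inter> multiples_upto (int (ram q)) (slope q))"
proof -
  have "card {j\<in>{1..sdim q}. grid_point j \<in> T} = card (grid_point ` {j\<in>{1..sdim q}. grid_point j \<in> T})"
    using inj_on_subset[OF inj_grid_point subset_UNIV] by (rule card_image[symmetric])
  also have "grid_point ` {j\<in>{1..sdim q}. grid_point j \<in> T} = T \<inter> multiples_upto (int (ram q)) (slope q)"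
    unfolding grid_point_image[symmetric] by blast
  finally show ?thesis .
qed

lemma card_grid_point_Levels: "card {j\<in>{1..sdim q}. grid_point j \<in> Levels q} = card (Levels q)"
proof -
  have "Levels q \<inter> multiples_upto (int (ram q)) (slope q) = Levels q"
    using Levels_subset_supp supp_subset_grid by blast
  then show ?thesis
    by (simp only: card_grid_point_preimage)
qed

lemma Bspace_homeomorphic:
  "Bspace q homeomorphic_space CstarC (card (Levels q)) (card (Inc (Levels q) \<inter> {0<..slope q}))"
proof -
  have "(A (Levels q) - Levels q) \<inter> multiples_upto (int (ram q)) (slope q)
      = Inc (Levels q) \<inter> {0<..slope q}"
    using A_Levels_ram_Ints A_pos by (auto simp: Inc_def multiples_upto_def)
  then have card: "card {j\<in>{1..sdim q}. grid_point j \<in> A (Levels q) - Levels q}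
      = card (Inc (Levels q) \<inter> {0<..slope q})"
    by (simp only: card_grid_point_preimage)
  show ?thesis
    using PiE_coeff_range_homeomorphic_CstarC[where P = "{1..sdim q}" and L = "Levels q"
        and T = "A (Levels q)" and e = grid_point]
    unfolding Bspace_def B_set_eq_PiE card_grid_point_Levels card by simp
qed

lemma SBspace_homeomorphic:
  "SBspace q homeomorphic_space CstarC (card (Levels q)) (card (Inc (Levels q) - \<nat>))"
proof -
  have "(A (Levels q) - \<int> - Levels q) \<inter> multiples_upto (int (ram q)) (slope q)
      = Inc (Levels q) - \<nat>"
    using A_Levels_ram_Ints A_Levels_le_slope A_pos[of _ "Levels q"]
    by (auto simp: Inc_def multiples_upto_def Nats_altdef2 intro: order_less_imp_le)
  then have card: "card {j\<in>{1..sdim q}. grid_point j \<in> A (Levels q) - \<int> - Levels q}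
      = card (Inc (Levels q) - \<nat>)"
    by (simp only: card_grid_point_preimage)
  show ?thesis
    using PiE_coeff_range_homeomorphic_CstarC[where P = "{1..sdim q}" and L = "Levels q"
        and T = "A (Levels q) - \<int>" and e = grid_point]
    unfolding SBspace_def SB_set_eq_PiE card_grid_point_Levels card by simp
qed

lemma card_A_upto_slope_split:
  "card (Levels q) + card (Inc (Levels q) \<inter> {0<..slope q}) = card (A (Levels q) \<inter> {0<..slope q})"
proof -
  have fin: "finite (Inc (Levels q) \<inter> {0<..slope q})"
    using A_Levels_ram_Ints ram_ge_1
    by (intro finite_subset[OF _ finite_multiples_upto[of "int (ram q)"]])
      (auto simp: Inc_def multiples_upto_def)
  have "A (Levels q) \<inter> {0<..slope q} = Levels q \<union> (Inc (Levels q) \<inter> {0<..slope q})"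
    using Levels_subset_A Levels_subset_supp supp_pos supp_le_slope by (auto simp: Inc_def)
  moreover have "Levels q \<inter> (Inc (Levels q) \<inter> {0<..slope q}) = {}"
    by (auto simp: Inc_def)
  ultimately show ?thesis
    using card_Un_disjoint[OF finite_Levels fin] by simp
qed

lemma card_A_minus_Nats_split:
  "card (Levels q) + card (Inc (Levels q) - \<nat>) = card (A (Levels q) - \<nat>)"
proof -
  have fin: "finite (Inc (Levels q) - \<nat>)"
    using A_Levels_ram_Ints A_Levels_le_slope A_pos ram_ge_1
    by (intro finite_subset[OF _ finite_multiples_upto[of "int (ram q)"]])
      (auto simp: Inc_def multiples_upto_def)
  have "A (Levels q) - \<nat> = Levels q \<union> (Inc (Levels q) - \<nat>)"
    using Levels_subset_A Levels_not_Ints Nats_subset_Ints by (auto simp: Inc_def)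
  moreover have "Levels q \<inter> (Inc (Levels q) - \<nat>) = {}"
    by (auto simp: Inc_def)
  ultimately show ?thesis
    using card_Un_disjoint[OF finite_Levels fin] by simp
qed

end

theorem mainTheorem3:
  fixes q :: "rat \<Rightarrow> complex"
  assumes "exp_factor q"
  defines "L \<equiv> Levels q"
    and "m \<equiv> card (Levels q)"
    and "K \<equiv> slope q"
  shows "Bspace q homeomorphic_space (CstarC m (card (Inc L \<inter> {0<..K}))) \<and>
         SBspace q homeomorphic_space (CstarC m (card (Inc L - \<nat>))) \<and>
         m + card (Inc L \<inter> {0<..K}) = card (A L \<inter> {0<..K}) \<and>
         m + card (Inc L - \<nat>) = card (A L - \<nat>) \<and>
         rat_of_nat (card (A L - \<nat>)) =
           (\<Sum>i = 1..m. of_int (rr L i) * klist L ! (i - 1)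
                         - of_int \<lfloor>of_int (rr L (i - 1)) * klist L ! (i - 1)\<rfloor>)"
proof -
  interpret exponential_factor q
    using assms(1) by unfold_locales
  have "\<forall>x\<in>Levels q. 0 < x"
    using Levels_subset_supp supp_pos by blast
  then show ?thesis
    unfolding L_def m_def K_def
    using Bspace_homeomorphic SBspace_homeomorphic card_A_upto_slope_split card_A_minus_Nats_split
      card_A_minus_Nats[OF finite_Levels]
    by blast
qed

end
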